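(* Let $n\geqslant 2$. The subset $H(\mathbb{I})\cup E(\mathbf{I}\mathbb{N}_{\infty}^n)$ generates the semigroup $\mathbf{I}\mathbb{N}_{\infty}^n$. Moreover, any subset $A=A_1\sqcup A_2\subseteq\mathbf{I}\mathbb{N}_{\infty}^n$ such that $A_1$ generates the group $H(\mathbb{I})$ and $A_2$ generates the semilattice $E(\mathbf{I}\mathbb{N}_{\infty}^n)$ generates $\mathbf{I}\mathbb{N}_{\infty}^n$.
   Context: $\mathbb{N}=\{1,2,3,\ldots\}$, $n\geqslant 2$, and $\mathbb{N}^n$ carries the Euclidean metric $d$. A partial isometry of $\mathbb{N}^n$ is an injective partial map $\alpha\colon\mathbb{N}^n\rightharpoonup\mathbb{N}^n$ with $d((\mathbf{x})\alpha,(\mathbf{y})\alpha)=d(\mathbf{x},\mathbf{y})$ for all $\mathbf{x},\mathbf{y}\in\operatorname{dom}\alpha$; it is cofinite if $\mathbb{N}^n\setminus\operatorname{dom}\alpha$ and $\mathbb{N}^n\setminus\operatorname{ran}\alpha$ are finite. $\mathbf{I}\mathbb{N}_{\infty}^n$ is the monoid of all partial cofinite isometries of $\mathbb{N}^n$ under composition of partial maps written on the right: $\mathbf{x}(\alpha\beta)=(\mathbf{x}\alpha)\beta$ with $\operatorname{dom}(\alpha\beta)=\{\mathbf{x}\in\operatorname{dom}\alpha\colon \mathbf{x}\alpha\in\operatorname{dom}\beta\}$. Its identity is the identity map $\mathbb{I}$ of $\mathbb{N}^n$, $H(\mathbb{I})$ is its group of units and $E(\mathbf{I}\mathbb{N}_{\infty}^n)$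 its set of idempotents. *)

theory Defs
  imports "HOL-Analysis.Analysis"
begin

text \<open>Points of \<open>\<nat>\<^sup>n\<close>: vectors with natural-number components, all \<open>\<ge> 1\<close>
  (the paper's \<open>\<nat> = {1,2,3,...}\<close>). The dimension n is the cardinality of the
  finite index type 'n.\<close>

definition Npts :: "(nat ^ 'n::finite) set" where
  "Npts = {x. \<forall>i. 1 \<le> x $ i}"

definition Ndist :: "nat ^ 'n::finite \<Rightarrow> nat ^ 'n \<Rightarrow> real" where
  "Ndist x y = dist ((\<chi> i. real (x $ i)) :: real ^ 'n) (\<chi> i. real (y $ i))"

definition partial_isometry :: "(nat ^ 'n::finite \<rightharpoonup> nat ^ 'n) \<Rightarrow> bool" where
  "partial_isometry \<alpha> \<longleftrightarrow>
     dom \<alpha> \<subseteq> Npts \<and> ran \<alpha> \<subseteq> Npts \<and> inj_on \<alpha> (dom \<alpha>) \<and>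
     (\<forall>x\<in>dom \<alpha>. \<forall>y\<in>dom \<alpha>. Ndist (the (\<alpha> x)) (the (\<alpha> y)) = Ndist x y)"

definition INinf :: "(nat ^ 'n::finite \<rightharpoonup> nat ^ 'n) set" where
  "INinf = {\<alpha>. partial_isometry \<alpha> \<and> finite (Npts - dom \<alpha>) \<and> finite (Npts - ran \<alpha>)}"

text \<open>Composition written on the right: \<open>x(\<alpha>\<beta>) = (x\<alpha>)\<beta>\<close>.\<close>
definition pmult :: "('a \<rightharpoonup> 'a) \<Rightarrow> ('a \<rightharpoonup> 'a) \<Rightarrow> ('a \<rightharpoonup> 'a)" where
  "pmult \<alpha> \<beta> = \<beta> \<circ>\<^sub>m \<alpha>"

definition Nid :: "nat ^ 'n::finite \<rightharpoonup> nat ^ 'n" where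
  "Nid x = (if x \<in> Npts then Some x else None)"

definition Hunits :: "(nat ^ 'n::finite \<rightharpoonup> nat ^ 'n) set" where
  "Hunits = {\<alpha> \<in> INinf. \<exists>\<beta>\<in>INinf. pmult \<alpha> \<beta> = Nid \<and> pmult \<beta> \<alpha> = Nid}"

definition Eidem :: "(nat ^ 'n::finite \<rightharpoonup> nat ^ 'n) set" where
  "Eidem = {\<alpha> \<in> INinf. pmult \<alpha> \<alpha> = \<alpha>}"

definition pinv :: "('a \<rightharpoonup> 'a) \<Rightarrow> ('a \<rightharpoonup> 'a)" where
  "pinv \<alpha> y = (if y \<in> ran \<alpha> then Some (THE x. \<alpha> x = Some y) else None)"

inductive_set sgen :: "('a \<rightharpoonup> 'a) set \<Rightarrow> ('a \<rightharpoonup> 'a) set" for A where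
  base: "a \<in> A \<Longrightarrow> a \<in> sgen A"
| mult: "a \<in> sgen A \<Longrightarrow> b \<in> sgen A \<Longrightarrow> pmult a b \<in> sgen A"

inductive_set ggen :: "(nat ^ 'n::finite \<rightharpoonup> nat ^ 'n) set \<Rightarrow> (nat ^ 'n \<rightharpoonup> nat ^ 'n) set"
  for A where
  unit: "Nid \<in> ggen A"
| base: "a \<in> A \<Longrightarrow> a \<in> ggen A"
| inv: "a \<in> ggen A \<Longrightarrow> pinv a \<in> ggen A"
| mult: "a \<in> ggen A \<Longrightarrow> b \<in> ggen A \<Longrightarrow> pmult a b \<in> ggen A"

end

theory Submission
  imports Defs "HOL-Combinatorics.Cycles"
begin

text \<open>In dimension \<open>n \<ge> 2\<close> every cofinite partial isometry \<open>\<alpha>\<close> is the restriction of a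
  coordinate permutation \<open>\<sigma>\<close> to the cofinite set \<open>dom \<alpha>\<close>, i.e.\ \<open>\<alpha> = \<epsilon>\<sigma>\<close> with \<open>\<epsilon>\<close> the identity
  on \<open>dom \<alpha>\<close>. Indeed, an isometry preserves inner products of difference vectors, so on
  a unit frame inside \<open>dom \<alpha>\<close> it acts as \<open>x\<^sub>i \<mapsto> \<pm>x\<^sub>i + c\<^sub>i\<close> on permuted coordinates;
  cofiniteness of domain and range (points with one tiny coordinate and all others
  huge, available because \<open>n \<ge> 2\<close>) forces all signs to be \<open>+\<close> and all shifts to be \<open>0\<close>.
  So the units are exactly the coordinate permutations; they form a finite group, so
  inverses are positive powers, and the identity is an idempotent. Hence any generating
  sets of the units and of the idempotents together generate the whole monoid.\<close>

definition Nsqdist :: "nat^'n::finite \<Rightarrow> nat^'n \<Rightarrow> int" where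
  "Nsqdist x y = (\<Sum>j\<in>UNIV. (int (x$j) - int (y$j))^2)"

definition Ninner :: "nat^'n::finite \<Rightarrow> nat^'n \<Rightarrow> nat^'n \<Rightarrow> int" where
  "Ninner a x y = (\<Sum>j\<in>UNIV. (int (x$j) - int (a$j)) * (int (y$j) - int (a$j)))"

lemma Ndist_eq_sqrt_Nsqdist: "Ndist x y = sqrt (real_of_int (Nsqdist x y))"
  unfolding Ndist_def Nsqdist_def dist_vec_def L2_set_def dist_real_def
  by (simp add: power2_abs)

lemma Nsqdist_nonneg: "Nsqdist x y \<ge> 0"
  unfolding Nsqdist_def by (simp add: sum_nonneg)

lemma Nsqdist_eq_if_Ndist_eq: "Ndist u v = Ndist x y \<Longrightarrow> Nsqdist u v = Nsqdist x y"
  unfolding Ndist_eq_sqrt_Nsqdist using Nsqdist_nonneg[of u v] Nsqdist_nonneg[of x y]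
  by simp

lemma Ninner_polarization: "2 * Ninner a x y = Nsqdist x a + Nsqdist y a - Nsqdist x y"
proof -
  have "2 * Ninner a x y =
      (\<Sum>j\<in>UNIV. 2 * ((int (x$j) - int (a$j)) * (int (y$j) - int (a$j))))"
    unfolding Ninner_def by (simp add: sum_distrib_left)
  also have "\<dots> = (\<Sum>j\<in>UNIV. (int (x$j) - int (a$j))^2 + (int (y$j) - int (a$j))^2
                               - (int (x$j) - int (y$j))^2)"
    by (rule sum.cong) (auto simp: power2_eq_square algebra_simps)
  also have "\<dots> = Nsqdist x a + Nsqdist y a - Nsqdist x y"
    unfolding Nsqdist_def by (simp add: sum.distrib sum_subtractf)
  finally show ?thesis .
qed

lemma partial_isometry_Nsqdist:
  assumes "partial_isometry \<alpha>" "x \<in> dom \<alpha>" "y \<in> dom \<alpha>"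
  shows "Nsqdist (the (\<alpha> x)) (the (\<alpha> y)) = Nsqdist x y"
  using assms unfolding partial_isometry_def by (blast intro: Nsqdist_eq_if_Ndist_eq)

lemma partial_isometry_Ninner:
  assumes "partial_isometry \<alpha>" "a \<in> dom \<alpha>" "x \<in> dom \<alpha>" "y \<in> dom \<alpha>"
  shows "Ninner (the (\<alpha> a)) (the (\<alpha> x)) (the (\<alpha> y)) = Ninner a x y"
proof -
  have "2 * Ninner (the (\<alpha> a)) (the (\<alpha> x)) (the (\<alpha> y)) = 2 * Ninner a x y"
    unfolding Ninner_polarization using partial_isometry_Nsqdist[OF assms(1)] assms by simp
  thus ?thesis by simp
qed

lemma sum_power2_eq_1_int:
  fixes g :: "'a::finite \<Rightarrow> int"
  assumes "(\<Sum>j\<in>UNIV. (g j)^2) = 1"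
  obtains k where "g k = 1 \<or> g k = -1" "\<And>j. j \<noteq> k \<Longrightarrow> g j = 0"
proof -
  obtain k where k: "g k \<noteq> 0"
    using assms by fastforce
  have split: "(\<Sum>j\<in>UNIV. (g j)^2) = (g k)^2 + (\<Sum>j\<in>UNIV-{k}. (g j)^2)"
    by (subst sum.remove[of _ k]) auto
  have "(\<Sum>j\<in>UNIV-{k}. (g j)^2) \<ge> 0" by (simp add: sum_nonneg)
  moreover have "(g k)^2 \<ge> 1" using k
    by (metis int_one_le_iff_zero_less zero_less_power2)
  ultimately have gk: "(g k)^2 = 1" and rest: "(\<Sum>j\<in>UNIV-{k}. (g j)^2) = 0"
    using split assms by linarith+
  have "\<forall>j\<in>UNIV-{k}. (g j)^2 = 0"
    using rest by (subst (asm) sum_nonneg_eq_0_iff) auto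
  with gk show ?thesis using that by (auto simp: power2_eq_1_iff)
qed

section \<open>Isometries are affine on a unit frame\<close>

definition Nstep :: "nat^'n::finite \<Rightarrow> 'n \<Rightarrow> nat^'n" where
  "Nstep a i = (\<chi> j. if j = i then a$j + 1 else a$j)"

lemma Ninner_Nstep_Nstep: "Ninner a (Nstep a i) (Nstep a k) = (if i = k then 1 else 0)"
proof -
  have "Ninner a (Nstep a i) (Nstep a k) = (\<Sum>j\<in>UNIV. if j = i then (if i = k then 1 else 0) else 0)"
    unfolding Ninner_def Nstep_def by (intro sum.cong) auto
  thus ?thesis by simp
qed

lemma Ninner_Nstep: "Ninner a x (Nstep a i) = int (x$i) - int (a$i)"
proof -
  have "Ninner a x (Nstep a i) = (\<Sum>j\<in>UNIV. if j = i then int (x$i) - int (a$i) else 0)"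
    unfolding Ninner_def Nstep_def by (intro sum.cong) auto
  thus ?thesis by simp
qed

lemma partial_isometry_image_of_Nstep:
  assumes \<alpha>: "partial_isometry \<alpha>" and a: "a \<in> dom \<alpha>" and ai: "Nstep a i \<in> dom \<alpha>"
  obtains k s where "s = 1 \<or> s = -1"
    "\<And>j. int (the (\<alpha> (Nstep a i)) $ j) - int (the (\<alpha> a) $ j) = (if j = k then s else 0)"
proof -
  let ?d = "\<lambda>j. int (the (\<alpha> (Nstep a i)) $ j) - int (the (\<alpha> a) $ j)"
  have "(\<Sum>j\<in>UNIV. (?d j)^2) = Ninner (the (\<alpha> a)) (the (\<alpha> (Nstep a i))) (the (\<alpha> (Nstep a i)))"
    unfolding Ninner_def power2_eq_square ..
  also have "\<dots> = 1"
    using partial_isometry_Ninner[OF \<alpha> a ai ai] by (simp add: Ninner_Nstep_Nstep)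
  finally obtain k where "?d k = 1 \<or> ?d k = -1" "\<And>j. j \<noteq> k \<Longrightarrow> ?d j = 0"
    by (rule sum_power2_eq_1_int) blast
  then show ?thesis
    by (intro that[of "?d k" k]) auto
qed

text \<open>The signed permutation \<open>(\<pi>, s)\<close> is read off from the images of the frame vectors;
  then the preserved inner product \<open>\<langle>x - a, Nstep a i - a\<rangle> = x\<^sub>i - a\<^sub>i\<close> gives the formula.\<close>

lemma partial_isometry_affine_on_frame:
  assumes \<alpha>: "partial_isometry \<alpha>" and a: "a \<in> dom \<alpha>" and steps: "\<And>i. Nstep a i \<in> dom \<alpha>"
  obtains \<pi> s c where "inj \<pi>" "\<And>i. s i = 1 \<or> s i = -1"
    "\<And>x i. x \<in> dom \<alpha> \<Longrightarrow> int (the (\<alpha> x) $ \<pi> i) = s i * int (x $ i) + c i"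
proof -
  define f where "f x = the (\<alpha> x)" for x
  define b where "b = f a"
  have "\<forall>i. \<exists>k s. (s = 1 \<or> s = -1) \<and>
      (\<forall>j. int (f (Nstep a i) $ j) - int (b $ j) = (if j = k then s else 0))"
    unfolding f_def b_def
    by (metis partial_isometry_image_of_Nstep[OF \<alpha> a steps])
  then obtain \<pi> s where s: "\<And>i. s i = 1 \<or> s i = -1"
    and d: "\<And>i j. int (f (Nstep a i) $ j) - int (b $ j) = (if j = \<pi> i then s i else 0)"
    by metis
  have ss: "s i * s i = 1" for i using s[of i] by auto
  have Ninner_image: "Ninner b y (f (Nstep a i)) = (int (y $ \<pi> i) - int (b $ \<pi> i)) * s i" for y i
  proof -
    have "Ninner b y (f (Nstep a i)) =
        (\<Sum>j\<in>UNIV. if j = \<pi> i then (int (y $ \<pi> i) - int (b $ \<pi> i)) * s i else 0)"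
      unfolding Ninner_def d by (intro sum.cong) auto
    thus ?thesis by simp
  qed
  have preserved: "Ninner b (f x) (f (Nstep a i)) = Ninner a x (Nstep a i)" if "x \<in> dom \<alpha>" for x i
    unfolding f_def b_def using partial_isometry_Ninner[OF \<alpha> a that steps] .
  have "inj \<pi>"
  proof (rule injI, rule ccontr)
    fix i k assume eq: "\<pi> i = \<pi> k" and ne: "i \<noteq> k"
    have "0 = Ninner b (f (Nstep a i)) (f (Nstep a k))"
      using preserved[OF steps, of i k] ne by (simp add: Ninner_Nstep_Nstep)
    also have "\<dots> = s i * s k"
      using eq d[of i "\<pi> i"] by (simp add: Ninner_image)
    finally show False using ss[of i] ss[of k] by (metis mult_eq_0_iff zero_neq_one)
  qed
  moreover have "int (f x $ \<pi> i) = s i * int (x $ i) + (int (b $ \<pi> i) - s i * int (a $ i))"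
    if x: "x \<in> dom \<alpha>" for x i
  proof -
    have "(int (f x $ \<pi> i) - int (b $ \<pi> i)) * s i = int (x$i) - int (a$i)"
      using preserved[OF x, of i] by (simp add: Ninner_image Ninner_Nstep)
    hence "(int (f x $ \<pi> i) - int (b $ \<pi> i)) * (s i * s i) = (int (x$i) - int (a$i)) * s i"
      by (metis mult.assoc)
    thus ?thesis using ss[of i] by (simp add: algebra_simps)
  qed
  ultimately show ?thesis
    using that[of \<pi> s "\<lambda>i. int (b $ \<pi> i) - s i * int (a $ i)"] s unfolding f_def by blast
qed

section \<open>Cofinite partial isometries are restricted coordinate permutations\<close>

lemma cofinite_Npts_contains_large:
  fixes S :: "(nat^'n::finite) set"
  assumes "finite (Npts - S)"
  obtains M where "\<And>(x :: nat^'n) j. x \<in> Npts \<Longrightarrow> M < x $ j \<Longrightarrow> x \<in> S"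
proof -
  have "finite ((\<lambda>(x,j). x$j) ` ((Npts - S) \<times> UNIV))" using assms by simp
  then obtain M where M: "\<forall>m\<in>(\<lambda>(x,j). x$j) ` ((Npts - S) \<times> UNIV). m \<le> M"
    using finite_nat_set_iff_bounded_le by blast
  show ?thesis
  proof (rule that)
    fix x :: "nat^'n" and j assume x: "x \<in> Npts" "M < x $ j"
    show "x \<in> S"
    proof (rule ccontr)
      assume "x \<notin> S"
      with x have "x $ j \<in> (\<lambda>(x,j). x$j) ` ((Npts - S) \<times> UNIV)"
        by (intro image_eqI[of _ _ "(x, j)"]) auto
      with M have "x $ j \<le> M" by blast
      with x show False by simp
    qed
  qed
qed

lemma exists_other_index:
  assumes "CARD('n::finite) \<ge> 2"
  obtains j where "j \<noteq> (i :: 'n)"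
proof -
  have "\<not> CARD('n) \<le> Suc 0" using assms by simp
  then have "\<exists>j. j \<noteq> i" using card_le_Suc0_iff_eq[of "UNIV :: 'n set"] by (metis finite UNIV_I)
  with that show ?thesis by blast
qed

text \<open>A coordinate tending to infinity shows \<open>s\<^sub>i = 1\<close>; a point of the domain with
  \<open>x\<^sub>i = 1\<close> shows \<open>c\<^sub>i \<ge> 0\<close>, and a point of the range with \<open>y\<^sub>\<pi>\<^sub>i = 1\<close> shows \<open>c\<^sub>i \<le> 0\<close>.\<close>

lemma INinf_affine_coordinates_trivial:
  assumes card: "CARD('n::finite) \<ge> 2" and A: "\<alpha> \<in> (INinf :: (nat^'n \<rightharpoonup> nat^'n) set)"
    and s: "s i = 1 \<or> s i = -1"
    and affine: "\<And>x. x \<in> dom \<alpha> \<Longrightarrow> int (the (\<alpha> x) $ \<pi> i) = s i * int (x $ i) + c i"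
  shows "s i = 1" and "c i = 0"
proof -
  have domN: "dom \<alpha> \<subseteq> Npts" and ranN: "ran \<alpha> \<subseteq> Npts"
    and cof: "finite (Npts - dom \<alpha>)" "finite (Npts - ran \<alpha>)"
    using A unfolding INinf_def partial_isometry_def by auto
  obtain M where inD: "\<And>x j. x \<in> Npts \<Longrightarrow> M < x $ j \<Longrightarrow> x \<in> dom \<alpha>"
    using cofinite_Npts_contains_large[OF cof(1)] by blast
  obtain M' where inR: "\<And>y j. y \<in> Npts \<Longrightarrow> M' < y $ j \<Longrightarrow> y \<in> ran \<alpha>"
    using cofinite_Npts_contains_large[OF cof(2)] by blast
  have image_pos: "the (\<alpha> x) $ \<pi> i \<ge> 1" if "x \<in> dom \<alpha>" for x
    using that ranN by (auto simp: Npts_def ran_def)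
  show s1: "s i = 1"
  proof (rule ccontr)
    assume "s i \<noteq> 1"
    define K where "K = M + 1 + nat (c i)"
    have xK: "(\<chi> j. K) \<in> dom \<alpha>" by (rule inD[of _ i]) (auto simp: Npts_def K_def)
    have "int (the (\<alpha> (\<chi> j. K)) $ \<pi> i) = - int K + c i"
      using affine[OF xK] \<open>s i \<noteq> 1\<close> s by auto
    moreover have "int K \<ge> c i + 1" unfolding K_def by linarith
    ultimately show False using image_pos[OF xK] by linarith
  qed
  obtain j where j: "j \<noteq> i" using exists_other_index[OF card] .
  define x :: "nat^'n" where "x = (\<chi> k. if k = i then 1 else M + 1)"
  have "x \<in> dom \<alpha>" by (rule inD[of _ j]) (use j in \<open>auto simp: x_def Npts_def\<close>)
  from image_pos[OF this] affine[OF this] have c_nonneg: "c i \<ge> 0" using s1 by (simp add: x_def)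
  obtain j' where j': "j' \<noteq> \<pi> i" using exists_other_index[OF card] .
  define y :: "nat^'n" where "y = (\<chi> k. if k = \<pi> i then 1 else M' + 1)"
  have "y \<in> ran \<alpha>" by (rule inR[of _ j']) (use j' in \<open>auto simp: y_def Npts_def\<close>)
  then obtain x' where x': "\<alpha> x' = Some y" by (auto simp: ran_def)
  hence "x' \<in> dom \<alpha>" by auto
  have "x' $ i \<ge> 1" using domN \<open>x' \<in> dom \<alpha>\<close> by (auto simp: Npts_def)
  moreover have "the (\<alpha> x') $ \<pi> i = 1" using x' by (simp add: y_def)
  ultimately have "c i \<le> 0" using affine[OF \<open>x' \<in> dom \<alpha>\<close>] s1 by (simp; linarith)
  with c_nonneg show "c i = 0" by simp
qed

lemma INinf_restricted_coord_perm:
  assumes card: "CARD('n::finite) \<ge> 2" and A: "\<alpha> \<in> (INinf :: (nat^'n \<rightharpoonup> nat^'n) set)"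
  obtains p where "bij p" "\<And>x. x \<in> dom \<alpha> \<Longrightarrow> \<alpha> x = Some (\<chi> j. x $ p j)"
proof -
  have \<alpha>: "partial_isometry \<alpha>" and cof: "finite (Npts - dom \<alpha>)"
    using A unfolding INinf_def by auto
  obtain M where inD: "\<And>x j. x \<in> Npts \<Longrightarrow> M < x $ j \<Longrightarrow> x \<in> dom \<alpha>"
    using cofinite_Npts_contains_large[OF cof] by blast
  define a :: "nat^'n" where "a = (\<chi> j. M + 1)"
  have "a \<in> dom \<alpha>" by (rule inD[of _ undefined]) (auto simp: a_def Npts_def)
  moreover have "Nstep a i \<in> dom \<alpha>" for i
    by (rule inD[of _ i]) (auto simp: a_def Nstep_def Npts_def)
  ultimately obtain \<pi> s c where inj: "inj \<pi>" and s: "\<And>i. s i = 1 \<or> s i = -1"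
    and affine: "\<And>x i. x \<in> dom \<alpha> \<Longrightarrow> int (the (\<alpha> x) $ \<pi> i) = s i * int (x $ i) + c i"
    using partial_isometry_affine_on_frame[OF \<alpha>] by metis
  have coord: "the (\<alpha> x) $ \<pi> i = x $ i" if "x \<in> dom \<alpha>" for x i
    using affine[OF that, of i] INinf_affine_coordinates_trivial[of \<alpha> s i \<pi> c] card A s affine
    by simp
  have bij: "bij \<pi>" using inj by (simp add: bij_def finite_UNIV_inj_surj)
  show ?thesis
  proof (rule that)
    show "bij (inv \<pi>)" using bij by (rule bij_imp_bij_inv)
    fix x assume x: "x \<in> dom \<alpha>"
    have "the (\<alpha> x) = (\<chi> j. x $ inv \<pi> j)"
    proof (subst vec_eq_iff, intro allI)
      fix j
      have "\<pi> (inv \<pi> j) = j" using bij by (simp add: bij_is_surj surj_f_inv_f)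
      thus "the (\<alpha> x) $ j = (\<chi> j. x $ inv \<pi> j) $ j" using coord[OF x, of "inv \<pi> j"] by simp
    qed
    with x show "\<alpha> x = Some (\<chi> j. x $ inv \<pi> j)" by auto
  qed
qed

lemma dom_pmult: "dom (pmult \<alpha> \<beta>) = {x \<in> dom \<alpha>. the (\<alpha> x) \<in> dom \<beta>}"
  by (auto simp: pmult_def map_comp_def dom_def split: option.splits)

lemma pmult_apply: "x \<in> dom (pmult \<alpha> \<beta>) \<Longrightarrow> pmult \<alpha> \<beta> x = \<beta> (the (\<alpha> x))"
  by (auto simp: pmult_def map_comp_def dom_def split: option.splits)

lemma partial_isometry_pmult:
  assumes a: "partial_isometry \<alpha>" and b: "partial_isometry \<beta>"
  shows "partial_isometry (pmult \<alpha> \<beta>)"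
  unfolding partial_isometry_def
proof (intro conjI)
  show "dom (pmult \<alpha> \<beta>) \<subseteq> Npts" using a by (auto simp: dom_pmult partial_isometry_def)
  show "ran (pmult \<alpha> \<beta>) \<subseteq> Npts" using b unfolding partial_isometry_def
    by (auto simp: ran_def pmult_def map_comp_def split: option.splits)
  show "inj_on (pmult \<alpha> \<beta>) (dom (pmult \<alpha> \<beta>))"
  proof (rule inj_onI)
    fix x y assume xy: "x \<in> dom (pmult \<alpha> \<beta>)" "y \<in> dom (pmult \<alpha> \<beta>)"
      "pmult \<alpha> \<beta> x = pmult \<alpha> \<beta> y"
    hence "the (\<alpha> x) = the (\<alpha> y)"
      using b by (auto simp: pmult_apply dom_pmult partial_isometry_def inj_on_def)
    hence "\<alpha> x = \<alpha> y" using xy by (auto simp: dom_pmult)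
    thus "x = y" using a xy by (auto simp: dom_pmult partial_isometry_def inj_on_def)
  qed
  show "\<forall>x\<in>dom (pmult \<alpha> \<beta>). \<forall>y\<in>dom (pmult \<alpha> \<beta>).
      Ndist (the (pmult \<alpha> \<beta> x)) (the (pmult \<alpha> \<beta> y)) = Ndist x y"
    using a b by (auto simp: pmult_apply dom_pmult partial_isometry_def)
qed

lemma finite_Npts_minus_dom_pmult:
  assumes a: "partial_isometry \<alpha>" and "finite (Npts - dom \<alpha>)" "finite (Npts - dom \<beta>)"
  shows "finite (Npts - dom (pmult \<alpha> \<beta>))"
proof -
  have "Npts - dom (pmult \<alpha> \<beta>) \<subseteq> (Npts - dom \<alpha>) \<union> ((\<lambda>x. the (\<alpha> x)) -` (Npts - dom \<beta>) \<inter> dom \<alpha>)"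
    using a by (auto simp: dom_pmult partial_isometry_def ran_def)
  moreover have "inj_on (\<lambda>x. the (\<alpha> x)) (dom \<alpha>)"
    using a unfolding partial_isometry_def inj_on_def dom_def by force
  ultimately show ?thesis
    using assms by (meson finite_Un finite_subset finite_vimage_IntI)
qed

lemma finite_Npts_minus_ran_pmult:
  assumes b: "partial_isometry \<beta>" and "finite (Npts - ran \<alpha>)" "finite (Npts - ran \<beta>)"
  shows "finite (Npts - ran (pmult \<alpha> \<beta>))"
proof -
  have "Npts - ran (pmult \<alpha> \<beta>) \<subseteq> (Npts - ran \<beta>) \<union> (\<lambda>z. the (\<beta> z)) ` (Npts - ran \<alpha>)"
  proof
    fix y assume y: "y \<in> Npts - ran (pmult \<alpha> \<beta>)"
    show "y \<in> (Npts - ran \<beta>) \<union> (\<lambda>z. the (\<beta> z)) ` (Npts - ran \<alpha>)"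
    proof (cases "y \<in> ran \<beta>")
      case True
      then obtain z where z: "\<beta> z = Some y" by (auto simp: ran_def)
      have "z \<in> Npts" using b z unfolding partial_isometry_def by (auto simp: dom_def)
      moreover have "z \<notin> ran \<alpha>"
      proof
        assume "z \<in> ran \<alpha>"
        then obtain x where "\<alpha> x = Some z" by (auto simp: ran_def)
        with z have "pmult \<alpha> \<beta> x = Some y" by (simp add: pmult_def)
        with y show False by (auto simp: ran_def)
      qed
      ultimately show ?thesis using z by force
    qed (use y in auto)
  qed
  thus ?thesis using assms by (meson finite_Un finite_imageI finite_subset)
qed

lemma pmult_INinf: "\<alpha> \<in> INinf \<Longrightarrow> \<beta> \<in> INinf \<Longrightarrow> pmult \<alpha> \<beta> \<in> INinf"
  unfolding INinf_def
  by (auto intro: partial_isometry_pmult finite_Npts_minus_dom_pmult finite_Npts_minus_ran_pmult)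

lemma sgen_subset: "B \<subseteq> sgen C \<Longrightarrow> sgen B \<subseteq> sgen C"
proof
  fix a assume "a \<in> sgen B" "B \<subseteq> sgen C"
  thus "a \<in> sgen C" by (induction rule: sgen.induct) (auto intro: sgen.mult)
qed

lemma sgen_mono: "B \<subseteq> C \<Longrightarrow> sgen B \<subseteq> sgen C"
  by (rule sgen_subset) (auto intro: sgen.base)

lemma sgen_subset_INinf: "B \<subseteq> INinf \<Longrightarrow> sgen B \<subseteq> INinf"
proof
  fix a assume "a \<in> sgen B" "B \<subseteq> INinf"
  thus "a \<in> INinf" by (induction rule: sgen.induct) (auto intro: pmult_INinf)
qed

definition coord_perm :: "('n \<Rightarrow> 'n) \<Rightarrow> nat^'n::finite \<rightharpoonup> nat^'n" where
  "coord_perm p y = (if y \<in> Npts then Some (\<chi> j. y $ p j) else None)"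

definition partial_id :: "(nat^'n::finite) set \<Rightarrow> nat^'n \<rightharpoonup> nat^'n" where
  "partial_id D x = (if x \<in> D then Some x else None)"

lemma coord_perm_in_Npts: "y \<in> Npts \<Longrightarrow> (\<chi> j. y $ p j) \<in> Npts"
  unfolding Npts_def by simp

lemma pmult_coord_perm: "pmult (coord_perm p) (coord_perm q) = coord_perm (p \<circ> q)"
  by (rule ext) (simp add: pmult_def coord_perm_def map_comp_def coord_perm_in_Npts)

lemma coord_perm_id: "coord_perm id = Nid"
  by (rule ext) (simp add: coord_perm_def Nid_def)

lemma coord_perm_inv_apply:
  assumes "bij p" "y \<in> Npts"
  shows "coord_perm p (\<chi> j. y $ inv p j) = Some y"
  using assms coord_perm_in_Npts
  by (simp add: coord_perm_def vec_eq_iff inv_f_f[OF bij_is_inj[OF assms(1)]])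

lemma inj_on_coord_perm:
  assumes "bij p"
  shows "inj_on (coord_perm p) (dom (coord_perm p))"
proof (rule inj_onI)
  fix x y assume "x \<in> dom (coord_perm p)" "y \<in> dom (coord_perm p)" "coord_perm p x = coord_perm p y"
  hence "\<forall>j. x $ p j = y $ p j" by (auto simp: coord_perm_def dom_def vec_eq_iff split: if_splits)
  thus "x = y" using assms by (metis bij_pointE vec_eq_iff)
qed

lemma Nsqdist_permute:
  assumes "bij p"
  shows "Nsqdist (\<chi> j. x $ p j) (\<chi> j. y $ p j) = Nsqdist x y"
  unfolding Nsqdist_def
  using sum.reindex_bij_betw[OF assms, of "\<lambda>j. (int (x$j) - int (y$j))^2"] by simp

lemma dom_coord_perm: "dom (coord_perm p) = Npts"
  by (auto simp: coord_perm_def dom_def)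

lemma ran_coord_perm:
  assumes "bij p"
  shows "ran (coord_perm p) = Npts"
proof
  show "ran (coord_perm p) \<subseteq> Npts"
    by (auto simp: ran_def coord_perm_def coord_perm_in_Npts split: if_splits)
  show "Npts \<subseteq> ran (coord_perm p)"
    using coord_perm_inv_apply[OF assms] by (blast intro: ranI)
qed

lemma coord_perm_INinf:
  assumes p: "bij p"
  shows "coord_perm p \<in> INinf"
proof -
  have "Ndist (the (coord_perm p x)) (the (coord_perm p y)) = Ndist x y"
    if "x \<in> Npts" "y \<in> Npts" for x y
    using that Nsqdist_permute[OF p] by (simp add: coord_perm_def Ndist_eq_sqrt_Nsqdist)
  thus ?thesis
    unfolding INinf_def partial_isometry_def
    using inj_on_coord_perm[OF p] by (simp add: dom_coord_perm ran_coord_perm[OF p])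
qed

lemma coord_perm_Hunits:
  assumes p: "bij p"
  shows "coord_perm p \<in> Hunits"
proof -
  have "p \<circ> inv p = id" "inv p \<circ> p = id"
    using p by (simp_all add: bij_is_surj bij_is_inj surj_iff[symmetric] inj_iff[symmetric])
  hence "pmult (coord_perm p) (coord_perm (inv p)) = Nid"
    "pmult (coord_perm (inv p)) (coord_perm p) = Nid"
    by (simp_all add: pmult_coord_perm coord_perm_id)
  thus ?thesis
    unfolding Hunits_def using coord_perm_INinf p bij_imp_bij_inv by blast
qed

lemma partial_id_Eidem:
  assumes "D \<subseteq> Npts" "finite (Npts - D)"
  shows "partial_id D \<in> Eidem"
proof -
  have dom: "dom (partial_id D) = D" and ran: "ran (partial_id D) = D"
    by (auto simp: partial_id_def dom_def ran_def)
  have "partial_isometry (partial_id D)"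
    unfolding partial_isometry_def dom ran using assms
    by (auto simp: partial_id_def inj_on_def)
  moreover have "pmult (partial_id D) (partial_id D) = partial_id D"
    by (rule ext) (simp add: pmult_def partial_id_def map_comp_def)
  ultimately show ?thesis using assms unfolding Eidem_def INinf_def by (simp add: dom ran)
qed

lemma Nid_Eidem: "(Nid :: nat^'n::finite \<rightharpoonup> nat^'n) \<in> Eidem"
proof -
  have "(Nid :: nat^'n \<rightharpoonup> nat^'n) = partial_id Npts" by (rule ext) (simp add: partial_id_def Nid_def)
  thus ?thesis using partial_id_Eidem[of "Npts :: (nat^'n) set"] by simp
qed

lemma INinf_eq_partial_id_coord_perm:
  assumes "CARD('n::finite) \<ge> 2" and A: "\<alpha> \<in> (INinf :: (nat^'n \<rightharpoonup> nat^'n) set)"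
  obtains p where "bij p" "\<alpha> = pmult (partial_id (dom \<alpha>)) (coord_perm p)"
proof -
  obtain p where p: "bij p" and \<alpha>: "\<And>x. x \<in> dom \<alpha> \<Longrightarrow> \<alpha> x = Some (\<chi> j. x $ p j)"
    using INinf_restricted_coord_perm[OF assms] by blast
  have "dom \<alpha> \<subseteq> Npts" using A unfolding INinf_def partial_isometry_def by auto
  with \<alpha> have "\<alpha> x = pmult (partial_id (dom \<alpha>)) (coord_perm p) x" for x
    by (cases "x \<in> dom \<alpha>") (auto simp: pmult_def partial_id_def coord_perm_def domIff)
  hence "\<alpha> = pmult (partial_id (dom \<alpha>)) (coord_perm p)" ..
  with p show ?thesis using that by blast
qed

lemma Hunits_coord_perm:
  assumes "CARD('n::finite) \<ge> 2" and a: "a \<in> (Hunits :: (nat^'n \<rightharpoonup> nat^'n) set)"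
  obtains p where "bij p" "a = coord_perm p"
proof -
  from a obtain \<beta> where A: "a \<in> INinf" and a\<beta>: "pmult a \<beta> = Nid"
    unfolding Hunits_def by blast
  obtain p where p: "bij p" and a_eq: "a = pmult (partial_id (dom a)) (coord_perm p)"
    using INinf_eq_partial_id_coord_perm[OF assms(1) A] by blast
  have "Npts \<subseteq> dom a"
  proof
    fix x :: "nat^'n" assume "x \<in> Npts"
    hence "x \<in> dom (pmult a \<beta>)" by (simp add: a\<beta> Nid_def dom_def)
    thus "x \<in> dom a" by (simp add: dom_pmult)
  qed
  moreover have "dom a \<subseteq> Npts" using A unfolding INinf_def partial_isometry_def by blast
  ultimately have "partial_id (dom a) = coord_perm id"
    by (intro ext) (simp add: partial_id_def coord_perm_def)
  with a_eq have "a = coord_perm p" by (simp add: pmult_coord_perm)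
  with p show ?thesis by (rule that)
qed

lemma pinv_coord_perm:
  fixes p :: "'n::finite \<Rightarrow> 'n"
  assumes p: "bij p"
  shows "pinv (coord_perm p) = coord_perm (inv p)"
proof (rule ext)
  fix y :: "nat^'n"
  show "pinv (coord_perm p) y = coord_perm (inv p) y"
  proof (cases "y \<in> Npts")
    case True
    have "(THE x. coord_perm p x = Some y) = (\<chi> j. y $ inv p j)"
      using inj_on_coord_perm[OF p] coord_perm_inv_apply[OF p True]
      by (intro the_equality) (auto simp: inj_on_def dom_def)
    thus ?thesis using True ran_coord_perm[OF p] by (simp add: pinv_def coord_perm_def)
  next
    case False
    thus ?thesis using ran_coord_perm[OF p] by (simp add: pinv_def coord_perm_def)
  qed
qed

lemma inv_eq_funpow:
  fixes p :: "'a::finite \<Rightarrow> 'a"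
  assumes "bij p"
  obtains m where "inv p = p ^^ m"
proof -
  have "permutation p" using assms by (simp add: permutation)
  then obtain n where n: "p ^^ n = id" "n > 0" by (rule permutation_is_nilpotent)
  then obtain m where "n = Suc m" using gr0_implies_Suc by blast
  with n have "p \<circ> p ^^ m = id" "p ^^ m \<circ> p = id"
    by (simp, metis funpow_Suc_right)
  hence "inv p = p ^^ m" by (rule inv_unique_comp)
  thus ?thesis by (rule that)
qed

lemma coord_perm_funpow_sgen:
  assumes "Nid \<in> sgen B" "coord_perm p \<in> sgen B"
  shows "coord_perm (p ^^ m) \<in> sgen B"
proof (induction m)
  case 0 show ?case using assms(1) by (simp add: coord_perm_id[symmetric] id_def)
next
  case (Suc m)
  have "pmult (coord_perm (p ^^ m)) (coord_perm p) \<in> sgen B"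
    using Suc assms(2) by (rule sgen.mult)
  thus ?case by (simp only: pmult_coord_perm funpow_Suc_right)
qed

lemma ggen_subset_sgen:
  assumes card: "CARD('n::finite) \<ge> 2"
    and units: "ggen A \<subseteq> (Hunits :: (nat^'n \<rightharpoonup> nat^'n) set)"
    and "A \<subseteq> B" and Nid: "Nid \<in> sgen B"
  shows "ggen A \<subseteq> sgen B"
proof
  fix a assume "a \<in> ggen A"
  thus "a \<in> sgen B"
  proof (induction rule: ggen.induct)
    case unit show ?case by (rule Nid)
  next
    case (base a) thus ?case using \<open>A \<subseteq> B\<close> by (auto intro: sgen.base)
  next
    case (inv a)
    obtain p where p: "bij p" and ap: "a = coord_perm p"
      using Hunits_coord_perm[OF card] inv.hyps units by blast
    obtain m where "inv p = p ^^ m" using inv_eq_funpow[OF p] .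
    thus ?case
      using coord_perm_funpow_sgen[OF Nid] inv.IH by (simp add: ap pinv_coord_perm[OF p])
  next
    case (mult a b) show ?case using mult.IH by (rule sgen.mult)
  qed
qed

lemma sgen_Hunits_Eidem:
  assumes "CARD('n::finite) \<ge> 2"
  shows "sgen (Hunits \<union> Eidem) = (INinf :: (nat^'n \<rightharpoonup> nat^'n) set)"
proof
  show "sgen (Hunits \<union> Eidem) \<subseteq> (INinf :: (nat^'n \<rightharpoonup> nat^'n) set)"
    by (rule sgen_subset_INinf) (auto simp: Hunits_def Eidem_def)
  show "(INinf :: (nat^'n \<rightharpoonup> nat^'n) set) \<subseteq> sgen (Hunits \<union> Eidem)"
  proof
    fix \<alpha> :: "nat^'n \<rightharpoonup> nat^'n" assume A: "\<alpha> \<in> INinf"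
    obtain p where p: "bij p" and \<alpha>: "\<alpha> = pmult (partial_id (dom \<alpha>)) (coord_perm p)"
      using INinf_eq_partial_id_coord_perm[OF assms A] by blast
    have "partial_id (dom \<alpha>) \<in> Eidem"
      using A by (intro partial_id_Eidem) (auto simp: INinf_def partial_isometry_def)
    with coord_perm_Hunits[OF p] show "\<alpha> \<in> sgen (Hunits \<union> Eidem)"
      by (subst \<alpha>) (blast intro: sgen.mult sgen.base)
  qed
qed

theorem mainTheorem11:
  assumes "CARD('n::finite) \<ge> 2"
  shows "sgen (Hunits \<union> Eidem) = (INinf :: (nat ^ 'n \<rightharpoonup> nat ^ 'n) set)
    \<and> (\<forall>A1 A2. A1 \<subseteq> Hunits \<and> A2 \<subseteq> Eidem \<and> A1 \<inter> A2 = {}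
          \<and> ggen A1 = (Hunits :: (nat ^ 'n \<rightharpoonup> nat ^ 'n) set) \<and> sgen A2 = Eidem
          \<longrightarrow> sgen (A1 \<union> A2) = INinf)"
proof -
  have generated: "sgen (Hunits \<union> Eidem) = (INinf :: (nat ^ 'n \<rightharpoonup> nat ^ 'n) set)"
    by (rule sgen_Hunits_Eidem[OF assms])
  have "sgen (A1 \<union> A2) = INinf"
    if h: "A1 \<subseteq> Hunits" "A2 \<subseteq> Eidem" "ggen A1 = Hunits" "sgen A2 = Eidem"
    for A1 A2 :: "(nat ^ 'n \<rightharpoonup> nat ^ 'n) set"
  proof -
    have idems: "Eidem \<subseteq> sgen (A1 \<union> A2)"
      using h(4) sgen_mono[of A2 "A1 \<union> A2"] by blast
    have units: "Hunits \<subseteq> sgen (A1 \<union> A2)"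
      using ggen_subset_sgen[OF assms, of A1 "A1 \<union> A2"] h(3) idems Nid_Eidem by blast
    have "sgen (A1 \<union> A2) \<subseteq> INinf"
      using h(1,2) generated sgen_mono[of "A1 \<union> A2" "Hunits \<union> Eidem"] by blast
    moreover have "INinf \<subseteq> sgen (A1 \<union> A2)"
      using idems units generated sgen_subset[of "Hunits \<union> Eidem" "A1 \<union> A2"] by blast
    ultimately show ?thesis by blast
  qed
  with generated show ?thesis by blast
qed

end
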